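(* Let $\mathscr{A}$ be a unital Banach algebra, $\mathscr{B},\mathscr{C}$ unital Banach algebras, and $\varphi:\mathscr{A}\to\mathscr{B}$, $\psi:\mathscr{A}\to\mathscr{C}$ algebra homomorphisms. The following are equivalent: (i) every bounded Jordan $(\varphi,\psi)$-derivation from $\mathscr{A}$ into any unital Banach $\mathscr{B}$-$\mathscr{C}$-bimodule is a $(\varphi,\psi)$-derivation; (ii) every bounded trilinear form $V:\mathscr{A}\times\mathscr{C}\times\mathscr{B}\to\mathbb{C}$ satisfying $$V(a^{2},c,b)=V(a,\psi(a)c,b)+V(a,c,b\varphi(a))\quad(a\in\mathscr{A},b\in\mathscr{B},c\in\mathscr{C})$$ also satisfies $$V(ad,c,b)=V(a,\psi(d)c,b)+V(d,c,b\varphi(a))\quad(a,d\in\mathscr{A},b\in\mathscr{B},c\in\mathscr{C}).$$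
   Context: A Banach $\mathscr{B}$-$\mathscr{C}$-bimodule is a Banach space $X$ that is a left Banach $\mathscr{B}$-module and a right Banach $\mathscr{C}$-module with commuting actions and $\|b\cdot x\cdot c\|\le\|b\|\|x\|\|c\|$; it is unital if the units of $\mathscr{B},\mathscr{C}$ act as the identity. A linear map $\delta:\mathscr{A}\to X$ is a Jordan $(\varphi,\psi)$-derivation if $\delta(a^{2})=\varphi(a)\cdot\delta(a)+\delta(a)\cdot\psi(a)$ for all $a$, and a $(\varphi,\psi)$-derivation if $\delta(ab)=\delta(a)\cdot\psi(b)+\varphi(a)\cdot\delta(b)$ for all $a,b$. *)

theory Defs
  imports "HOL-Analysis.Analysis"
begin

class complex_vector = real_vector +
  fixes scaleC :: "complex \<Rightarrow> 'a \<Rightarrow> 'a"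
  assumes scaleC_add_right: "scaleC z (x + y) = scaleC z x + scaleC z y"
    and scaleC_add_left: "scaleC (z + w) x = scaleC z x + scaleC w x"
    and scaleC_scaleC: "scaleC z (scaleC w x) = scaleC (z * w) x"
    and scaleC_one: "scaleC 1 x = x"
    and scaleR_scaleC: "scaleR r x = scaleC (complex_of_real r) x"

class complex_normed_vector = complex_vector + real_normed_vector +
  assumes norm_scaleC: "norm (scaleC z x) = cmod z * norm x"

class complex_algebra = complex_vector + ring +
  assumes mult_scaleC_left: "scaleC z x * y = scaleC z (x * y)"
    and mult_scaleC_right: "x * scaleC z y = scaleC z (x * y)"

class complex_banach_algebra_1 =
  complex_normed_vector + complex_algebra + real_normed_algebra_1 + banach

definition alg_hom :: "('a::complex_algebra \<Rightarrow> 'b::complex_algebra) \<Rightarrow> bool" where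
  "alg_hom f \<longleftrightarrow> (\<forall>x y. f (x + y) = f x + f y) \<and>
                  (\<forall>z x. f (scaleC z x) = scaleC z (f x)) \<and>
                  (\<forall>x y. f (x * y) = f x * f y)"

definition bounded_trilinear_form ::
    "('a::complex_normed_vector \<Rightarrow> 'c::complex_normed_vector \<Rightarrow> 'b::complex_normed_vector \<Rightarrow> complex) \<Rightarrow> bool" where
  "bounded_trilinear_form V \<longleftrightarrow>
     (\<forall>a a' c b. V (a + a') c b = V a c b + V a' c b) \<and>
     (\<forall>z a c b. V (scaleC z a) c b = z * V a c b) \<and>
     (\<forall>a c c' b. V a (c + c') b = V a c b + V a c' b) \<and>
     (\<forall>z a c b. V a (scaleC z c) b = z * V a c b) \<and>
     (\<forall>a c b b'. V a c (b + b') = V a c b + V a c b') \<and>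
     (\<forall>z a c b. V a c (scaleC z b) = z * V a c b) \<and>
     (\<exists>K. \<forall>a c b. cmod (V a c b) \<le> K * norm a * norm c * norm b)"

text \<open>A Banach space is given by a carrier set inside some type together with
  its operations; a B-C-bimodule additionally carries a left B-action and a
  right C-action.\<close>

record ('b, 'c, 'x) bimod =
  bm_carrier :: "'x set"
  bm_zero :: 'x
  bm_add :: "'x \<Rightarrow> 'x \<Rightarrow> 'x"
  bm_smul :: "complex \<Rightarrow> 'x \<Rightarrow> 'x"
  bm_norm :: "'x \<Rightarrow> real"
  bm_lact :: "'b \<Rightarrow> 'x \<Rightarrow> 'x"
  bm_ract :: "'x \<Rightarrow> 'c \<Rightarrow> 'x"

definition complex_banach_space :: "('b, 'c, 'x) bimod \<Rightarrow> bool" where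
  "complex_banach_space M \<longleftrightarrow>
    (let X = bm_carrier M; z0 = bm_zero M; ad = bm_add M; sm = bm_smul M; nm = bm_norm M in
     z0 \<in> X \<and>
     (\<forall>x\<in>X. \<forall>y\<in>X. ad x y \<in> X) \<and>
     (\<forall>z. \<forall>x\<in>X. sm z x \<in> X) \<and>
     (\<forall>x\<in>X. \<forall>y\<in>X. \<forall>w\<in>X. ad (ad x y) w = ad x (ad y w)) \<and>
     (\<forall>x\<in>X. \<forall>y\<in>X. ad x y = ad y x) \<and>
     (\<forall>x\<in>X. ad z0 x = x) \<and>
     (\<forall>x\<in>X. \<exists>y\<in>X. ad x y = z0) \<and>
     (\<forall>z. \<forall>x\<in>X. \<forall>y\<in>X. sm z (ad x y) = ad (sm z x) (sm z y)) \<and>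
     (\<forall>z w. \<forall>x\<in>X. sm (z + w) x = ad (sm z x) (sm w x)) \<and>
     (\<forall>z w. \<forall>x\<in>X. sm z (sm w x) = sm (z * w) x) \<and>
     (\<forall>x\<in>X. sm 1 x = x) \<and>
     (\<forall>x\<in>X. nm x = 0 \<longleftrightarrow> x = z0) \<and>
     (\<forall>x\<in>X. \<forall>y\<in>X. nm (ad x y) \<le> nm x + nm y) \<and>
     (\<forall>z. \<forall>x\<in>X. nm (sm z x) = cmod z * nm x) \<and>
     (\<forall>s :: nat \<Rightarrow> 'x. (\<forall>n. s n \<in> X) \<longrightarrow>
          (\<forall>e>0. \<exists>N::nat. \<forall>m\<ge>N. \<forall>n\<ge>N. nm (ad (s m) (sm (-1) (s n))) < e) \<longrightarrow>
          (\<exists>l\<in>X. \<forall>e>0. \<exists>N::nat. \<forall>n\<ge>N. nm (ad (s n) (sm (-1) l)) < e)))"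

definition unital_banach_bimodule ::
    "('b::complex_banach_algebra_1, 'c::complex_banach_algebra_1, 'x) bimod \<Rightarrow> bool" where
  "unital_banach_bimodule M \<longleftrightarrow> complex_banach_space M \<and>
    (let X = bm_carrier M; ad = bm_add M; sm = bm_smul M; nm = bm_norm M;
         l = bm_lact M; r = bm_ract M in
     (\<forall>b. \<forall>x\<in>X. l b x \<in> X) \<and>
     (\<forall>c. \<forall>x\<in>X. r x c \<in> X) \<and>
     (\<forall>b. \<forall>x\<in>X. \<forall>y\<in>X. l b (ad x y) = ad (l b x) (l b y)) \<and>
     (\<forall>b b'. \<forall>x\<in>X. l (b + b') x = ad (l b x) (l b' x)) \<and>
     (\<forall>z b. \<forall>x\<in>X. l (scaleC z b) x = sm z (l b x)) \<and>
     (\<forall>z b. \<forall>x\<in>X. l b (sm z x) = sm z (l b x)) \<and>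
     (\<forall>b b'. \<forall>x\<in>X. l (b * b') x = l b (l b' x)) \<and>
     (\<forall>x\<in>X. l 1 x = x) \<and>
     (\<forall>c. \<forall>x\<in>X. \<forall>y\<in>X. r (ad x y) c = ad (r x c) (r y c)) \<and>
     (\<forall>c c'. \<forall>x\<in>X. r x (c + c') = ad (r x c) (r x c')) \<and>
     (\<forall>z c. \<forall>x\<in>X. r x (scaleC z c) = sm z (r x c)) \<and>
     (\<forall>z c. \<forall>x\<in>X. r (sm z x) c = sm z (r x c)) \<and>
     (\<forall>c c'. \<forall>x\<in>X. r x (c * c') = r (r x c) c') \<and>
     (\<forall>x\<in>X. r x 1 = x) \<and>
     (\<forall>b c. \<forall>x\<in>X. l b (r x c) = r (l b x) c) \<and>
     (\<forall>b. \<forall>x\<in>X. nm (l b x) \<le> norm b * nm x) \<and>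
     (\<forall>c. \<forall>x\<in>X. nm (r x c) \<le> nm x * norm c) \<and>
     (\<forall>b c. \<forall>x\<in>X. nm (l b (r x c)) \<le> norm b * nm x * norm c))"

definition bounded_linear_into ::
    "('b, 'c, 'x) bimod \<Rightarrow> ('a::complex_normed_vector \<Rightarrow> 'x) \<Rightarrow> bool" where
  "bounded_linear_into M \<delta> \<longleftrightarrow>
     (\<forall>a. \<delta> a \<in> bm_carrier M) \<and>
     (\<forall>a a'. \<delta> (a + a') = bm_add M (\<delta> a) (\<delta> a')) \<and>
     (\<forall>z a. \<delta> (scaleC z a) = bm_smul M z (\<delta> a)) \<and>
     (\<exists>K. \<forall>a. bm_norm M (\<delta> a) \<le> K * norm a)"

definition jordan_derivation ::
    "('b, 'c, 'x) bimod \<Rightarrow> ('a::ring \<Rightarrow> 'b) \<Rightarrow> ('a \<Rightarrow> 'c) \<Rightarrow> ('a \<Rightarrow> 'x) \<Rightarrow> bool" where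
  "jordan_derivation M \<phi> \<psi> \<delta> \<longleftrightarrow>
     (\<forall>a. \<delta> (a * a) = bm_add M (bm_lact M (\<phi> a) (\<delta> a)) (bm_ract M (\<delta> a) (\<psi> a)))"

definition derivation ::
    "('b, 'c, 'x) bimod \<Rightarrow> ('a::ring \<Rightarrow> 'b) \<Rightarrow> ('a \<Rightarrow> 'c) \<Rightarrow> ('a \<Rightarrow> 'x) \<Rightarrow> bool" where
  "derivation M \<phi> \<psi> \<delta> \<longleftrightarrow>
     (\<forall>a d. \<delta> (a * d) = bm_add M (bm_ract M (\<delta> a) (\<psi> d)) (bm_lact M (\<phi> a) (\<delta> d)))"

text \<open>Condition (i), restricted to bimodules whose elements live in the type 'x.
  Quantifying over all types is done at the theorem level (free type variable).\<close>
definition cond_i ::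
    "('a::complex_banach_algebra_1 \<Rightarrow> 'b::complex_banach_algebra_1) \<Rightarrow>
     ('a \<Rightarrow> 'c::complex_banach_algebra_1) \<Rightarrow> 'x itself \<Rightarrow> bool" where
  "cond_i \<phi> \<psi> _ \<longleftrightarrow>
     (\<forall>(M :: ('b, 'c, 'x) bimod) (\<delta> :: 'a \<Rightarrow> 'x).
        unital_banach_bimodule M \<longrightarrow> bounded_linear_into M \<delta> \<longrightarrow>
        jordan_derivation M \<phi> \<psi> \<delta> \<longrightarrow> derivation M \<phi> \<psi> \<delta>)"

definition cond_ii ::
    "('a::complex_banach_algebra_1 \<Rightarrow> 'b::complex_banach_algebra_1) \<Rightarrow>
     ('a \<Rightarrow> 'c::complex_banach_algebra_1) \<Rightarrow> bool" where
  "cond_ii \<phi> \<psi> \<longleftrightarrow>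
     (\<forall>V :: 'a \<Rightarrow> 'c \<Rightarrow> 'b \<Rightarrow> complex.
        bounded_trilinear_form V \<longrightarrow>
        (\<forall>a b c. V (a * a) c b = V a (\<psi> a * c) b + V a c (b * \<phi> a)) \<longrightarrow>
        (\<forall>a d b c. V (a * d) c b = V a (\<psi> d * c) b + V d c (b * \<phi> a)))"

end

theory Submission
  imports Defs
begin

(* (ii) implies (i): if \<delta> is a bounded Jordan (\<phi>,\<psi>)-derivation into X and f is a bounded
   functional on X, then V(a,c,b) = f(b\<cdot>\<delta>(a)\<cdot>c) is a bounded trilinear form satisfying the
   hypothesis of (ii), and its conclusion at b = c = 1 reads f(\<delta>(ad)) = f(\<delta>(a)\<cdot>\<psi>(d) + \<phi>(a)\<cdot>\<delta>(d)).
   Bounded functionals separate the points of X by Hahn-Banach, which has to be proved for the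
   abstract bimodule: by Zorn there is a minimal sublinear functional below the norm, and a
   minimal sublinear functional is linear.
   (i) implies (ii): \<delta>(a) = V(a,\<cdot>,\<cdot>) is a bounded Jordan derivation into the Banach bimodule of
   bounded bilinear forms on C \<times> B, and the derivation identity for \<delta> is the conclusion of (ii). *)

section \<open>Hahn--Banach for abstract complex Banach spaces\<close>

locale banach_space_struct =
  fixes M :: "('b, 'c, 'x) bimod"
  assumes banach_space: "complex_banach_space M"
begin

abbreviation "X \<equiv> bm_carrier M"
abbreviation "vzero \<equiv> bm_zero M"
abbreviation "vadd \<equiv> bm_add M"
abbreviation "smul \<equiv> bm_smul M"
abbreviation "vnorm \<equiv> bm_norm M"
abbreviation "neg x \<equiv> smul (-1) x"
abbreviation "rsmul r x \<equiv> smul (complex_of_real r) x"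

lemmas banach_space_unfolded = banach_space[unfolded complex_banach_space_def Let_def]

lemma vzero_closed: "vzero \<in> X"
  using banach_space_unfolded by (elim conjE) metis

lemma vadd_closed: "x \<in> X \<Longrightarrow> y \<in> X \<Longrightarrow> vadd x y \<in> X"
  using banach_space_unfolded by (elim conjE) metis

lemma smul_closed: "x \<in> X \<Longrightarrow> smul z x \<in> X"
  using banach_space_unfolded by (elim conjE) metis

lemma neg_closed: "x \<in> X \<Longrightarrow> neg x \<in> X"
  by (rule smul_closed)

lemma rsmul_closed: "x \<in> X \<Longrightarrow> rsmul r x \<in> X"
  by (rule smul_closed)

lemma vadd_assoc: "x \<in> X \<Longrightarrow> y \<in> X \<Longrightarrow> w \<in> X \<Longrightarrow> vadd (vadd x y) w = vadd x (vadd y w)"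
  using banach_space_unfolded by (elim conjE) metis

lemma vadd_commute: "x \<in> X \<Longrightarrow> y \<in> X \<Longrightarrow> vadd x y = vadd y x"
  using banach_space_unfolded by (elim conjE) metis

lemma vadd_vzero_left: "x \<in> X \<Longrightarrow> vadd vzero x = x"
  using banach_space_unfolded by (elim conjE) metis

lemma vadd_inverse_exists: "x \<in> X \<Longrightarrow> \<exists>y\<in>X. vadd x y = vzero"
  using banach_space_unfolded by (elim conjE) metis

lemma smul_vadd: "x \<in> X \<Longrightarrow> y \<in> X \<Longrightarrow> smul z (vadd x y) = vadd (smul z x) (smul z y)"
  using banach_space_unfolded by (elim conjE) metis

lemma smul_add: "x \<in> X \<Longrightarrow> smul (z + w) x = vadd (smul z x) (smul w x)"
  using banach_space_unfolded by (elim conjE) metis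

lemma smul_smul: "x \<in> X \<Longrightarrow> smul z (smul w x) = smul (z * w) x"
  using banach_space_unfolded by (elim conjE) metis

lemma smul_one: "x \<in> X \<Longrightarrow> smul 1 x = x"
  using banach_space_unfolded by (elim conjE) metis

lemma vnorm_eq_zero_iff: "x \<in> X \<Longrightarrow> vnorm x = 0 \<longleftrightarrow> x = vzero"
  using banach_space_unfolded by (elim conjE) metis

lemma vnorm_triangle: "x \<in> X \<Longrightarrow> y \<in> X \<Longrightarrow> vnorm (vadd x y) \<le> vnorm x + vnorm y"
  using banach_space_unfolded by (elim conjE) metis

lemma vnorm_smul: "x \<in> X \<Longrightarrow> vnorm (smul z x) = cmod z * vnorm x"
  using banach_space_unfolded by (elim conjE) metis

lemma vadd_vzero_right: "x \<in> X \<Longrightarrow> vadd x vzero = x"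
  using vadd_commute vadd_vzero_left vzero_closed by metis

lemma smul_zero: assumes x: "x \<in> X" shows "smul 0 x = vzero"
proof -
  define u where "u = smul 0 x"
  have u: "u \<in> X" using smul_closed x u_def by blast
  obtain y where y: "y \<in> X" "vadd u y = vzero" using vadd_inverse_exists u by blast
  have "u = vadd u u" using smul_add[OF x, of 0 0] u_def by simp
  then have "vzero = vadd (vadd u u) y" using y by simp
  also have "\<dots> = u" using vadd_assoc vadd_vzero_right u y by simp
  finally show ?thesis using u_def by simp
qed

lemma vadd_neg_right: "x \<in> X \<Longrightarrow> vadd x (neg x) = vzero"
  using smul_add[of x 1 "-1"] smul_one smul_zero by simp

lemma vadd_neg_left: "x \<in> X \<Longrightarrow> vadd (neg x) x = vzero"
  using vadd_neg_right vadd_commute smul_closed by metis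

lemma vadd_neg_cancel: "x \<in> X \<Longrightarrow> y \<in> X \<Longrightarrow> vadd (vadd x y) (neg x) = y"
  by (metis vadd_assoc vadd_commute vadd_neg_right smul_closed vadd_vzero_right)

lemma vadd_neg_cancel_right: "x \<in> X \<Longrightarrow> y \<in> X \<Longrightarrow> vadd (vadd x y) (neg y) = x"
  using vadd_assoc vadd_neg_right vadd_vzero_right smul_closed by simp

lemma vadd_vadd_swap:
  "x \<in> X \<Longrightarrow> y \<in> X \<Longrightarrow> u \<in> X \<Longrightarrow> v \<in> X \<Longrightarrow>
   vadd (vadd x y) (vadd u v) = vadd (vadd x u) (vadd y v)"
  by (metis vadd_closed vadd_assoc vadd_commute)

lemma vnorm_nonneg: assumes x: "x \<in> X" shows "vnorm x \<ge> 0"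
proof -
  have "0 = vnorm (vadd x (neg x))" using vadd_neg_right vnorm_eq_zero_iff vzero_closed x by simp
  also have "\<dots> \<le> vnorm x + vnorm (neg x)" using vnorm_triangle x smul_closed by blast
  also have "\<dots> = 2 * vnorm x" using vnorm_smul x by simp
  finally show ?thesis by simp
qed

lemma rsmul_zero: "x \<in> X \<Longrightarrow> rsmul 0 x = vzero"
  using smul_zero by simp

lemma rsmul_add: "x \<in> X \<Longrightarrow> rsmul (s + t) x = vadd (rsmul s x) (rsmul t x)"
  using smul_add[of x "complex_of_real s" "complex_of_real t"] by simp

lemma rsmul_rsmul: "x \<in> X \<Longrightarrow> rsmul s (rsmul t x) = rsmul (s * t) x"
  using smul_smul[of x "complex_of_real s" "complex_of_real t"] by simp

definition sublinear :: "('x \<Rightarrow> real) \<Rightarrow> bool" where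
  "sublinear q \<longleftrightarrow> (\<forall>x\<in>X. \<forall>y\<in>X. q (vadd x y) \<le> q x + q y) \<and>
     (\<forall>r>0. \<forall>x\<in>X. q (rsmul r x) \<le> r * q x) \<and> q vzero = 0"

lemma sublinear_cong: "(\<And>x. x \<in> X \<Longrightarrow> q x = q' x) \<Longrightarrow> sublinear q = sublinear q'"
  unfolding sublinear_def using vadd_closed smul_closed vzero_closed by simp

lemma sublinear_vadd: "sublinear q \<Longrightarrow> x \<in> X \<Longrightarrow> y \<in> X \<Longrightarrow> q (vadd x y) \<le> q x + q y"
  unfolding sublinear_def by blast

lemma sublinear_vzero: "sublinear q \<Longrightarrow> q vzero = 0"
  unfolding sublinear_def by blast

lemma sublinear_rsmul_pos:
  assumes q: "sublinear q" and r: "r > 0" and x: "x \<in> X"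
  shows "q (rsmul r x) = r * q x"
proof -
  have "smul (1/r) (rsmul r x) = x" using smul_smul[OF x] smul_one[OF x] r by simp
  then have "q x \<le> (1/r) * q (rsmul r x)"
    using q r smul_closed[OF x] unfolding sublinear_def by (metis divide_pos_pos zero_less_one)
  moreover have "q (rsmul r x) \<le> r * q x" using q r x unfolding sublinear_def by blast
  ultimately show ?thesis using r by (simp add: field_simps)
qed

lemma sublinear_rsmul_nonneg:
  "sublinear q \<Longrightarrow> r \<ge> 0 \<Longrightarrow> x \<in> X \<Longrightarrow> q (rsmul r x) = r * q x"
  by (cases "r = 0") (simp_all add: smul_zero sublinear_vzero sublinear_rsmul_pos)

lemma sublinear_neg_le: assumes q: "sublinear q" and x: "x \<in> X" shows "- q (neg x) \<le> q x"
  using sublinear_vadd[OF q x smul_closed[OF x, of "-1"]] vadd_neg_right[OF x] sublinear_vzero[OF q]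
  by simp

lemma sublinear_vnorm: "sublinear vnorm"
  unfolding sublinear_def using vnorm_triangle vnorm_smul vnorm_eq_zero_iff vzero_closed by simp

text \<open>If \<open>q\<close> is minimal, then \<open>shrink q y = q\<close>, and evaluating at \<open>-y\<close> gives \<open>q (-y) \<le> - q y\<close>:
  this is why minimal sublinear functionals are linear.\<close>

definition shrink :: "('x \<Rightarrow> real) \<Rightarrow> 'x \<Rightarrow> 'x \<Rightarrow> real" where
  "shrink q y x = Inf ((\<lambda>t. q (vadd x (rsmul t y)) - t * q y) ` {0..})"

lemma shrink_bdd_below:
  assumes q: "sublinear q" and x: "x \<in> X" and y: "y \<in> X"
  shows "bdd_below ((\<lambda>t. q (vadd x (rsmul t y)) - t * q y) ` {0..})"
proof -
  have "- q (neg x) \<le> q (vadd x (rsmul t y)) - t * q y" if t: "t \<ge> 0" for t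
  proof -
    have "q (rsmul t y) \<le> q (vadd x (rsmul t y)) + q (neg x)"
      using sublinear_vadd[OF q vadd_closed[OF x smul_closed[OF y]] smul_closed[OF x, of "-1"]]
        vadd_neg_cancel[OF x smul_closed[OF y]] by simp
    then show ?thesis using sublinear_rsmul_nonneg[OF q t y] by simp
  qed
  then show ?thesis unfolding bdd_below_def by blast
qed

lemma shrink_le:
  "sublinear q \<Longrightarrow> x \<in> X \<Longrightarrow> y \<in> X \<Longrightarrow> t \<ge> 0 \<Longrightarrow>
   shrink q y x \<le> q (vadd x (rsmul t y)) - t * q y"
  unfolding shrink_def by (rule cInf_lower[OF _ shrink_bdd_below]) auto

lemma shrink_greatest:
  "(\<And>t. t \<ge> 0 \<Longrightarrow> c \<le> q (vadd x (rsmul t y)) - t * q y) \<Longrightarrow> c \<le> shrink q y x"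
  unfolding shrink_def by (rule cInf_greatest) auto

lemma shrink_le_self: "sublinear q \<Longrightarrow> x \<in> X \<Longrightarrow> y \<in> X \<Longrightarrow> shrink q y x \<le> q x"
  using shrink_le[of q x y 0] rsmul_zero vadd_vzero_right by simp

lemma shrink_neg:
  assumes q: "sublinear q" and y: "y \<in> X" shows "shrink q y (neg y) \<le> - q y"
  using shrink_le[OF q smul_closed[OF y, of "-1"] y, of 1] smul_one[OF y] vadd_neg_left[OF y] sublinear_vzero[OF q]
  by simp

lemma sublinear_shrink: assumes q: "sublinear q" and y: "y \<in> X" shows "sublinear (shrink q y)"
  unfolding sublinear_def
proof (intro conjI ballI allI impI)
  fix x1 x2 assume x1: "x1 \<in> X" and x2: "x2 \<in> X"
  have split: "shrink q y (vadd x1 x2)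
      \<le> (q (vadd x1 (rsmul t1 y)) - t1 * q y) + (q (vadd x2 (rsmul t2 y)) - t2 * q y)"
    if t1: "t1 \<ge> 0" and t2: "t2 \<ge> 0" for t1 t2
  proof -
    have "vadd (vadd x1 x2) (rsmul (t1 + t2) y) = vadd (vadd x1 (rsmul t1 y)) (vadd x2 (rsmul t2 y))"
      using rsmul_add[OF y] vadd_vadd_swap x1 x2 smul_closed[OF y] by simp
    then have "q (vadd (vadd x1 x2) (rsmul (t1 + t2) y)) \<le> q (vadd x1 (rsmul t1 y)) + q (vadd x2 (rsmul t2 y))"
      using sublinear_vadd[OF q] vadd_closed x1 x2 smul_closed[OF y] by simp
    moreover have "shrink q y (vadd x1 x2) \<le> q (vadd (vadd x1 x2) (rsmul (t1 + t2) y)) - (t1 + t2) * q y"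
      using shrink_le[OF q vadd_closed[OF x1 x2] y, of "t1 + t2"] t1 t2 by simp
    ultimately show ?thesis by (simp add: algebra_simps)
  qed
  have "shrink q y (vadd x1 x2) - (q (vadd x2 (rsmul t2 y)) - t2 * q y) \<le> shrink q y x1"
    if "t2 \<ge> 0" for t2
    by (rule shrink_greatest) (use split that in force)
  then have "shrink q y (vadd x1 x2) - shrink q y x1 \<le> shrink q y x2"
    by (intro shrink_greatest) (simp add: algebra_simps)
  then show "shrink q y (vadd x1 x2) \<le> shrink q y x1 + shrink q y x2" by simp
next
  fix r :: real and x assume r: "r > 0" and x: "x \<in> X"
  have "shrink q y (rsmul r x) / r \<le> q (vadd x (rsmul s y)) - s * q y" if s: "s \<ge> 0" for s
  proof -
    have "rsmul r (vadd x (rsmul s y)) = vadd (rsmul r x) (rsmul (r * s) y)"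
      using smul_vadd[OF x smul_closed[OF y]] rsmul_rsmul[OF y] by simp
    then have "q (vadd (rsmul r x) (rsmul (r * s) y)) = r * q (vadd x (rsmul s y))"
      using sublinear_rsmul_pos[OF q r] vadd_closed[OF x smul_closed[OF y]] by metis
    moreover have "shrink q y (rsmul r x) \<le> q (vadd (rsmul r x) (rsmul (r * s) y)) - (r * s) * q y"
      using shrink_le[OF q smul_closed[OF x] y, of "r * s"] r s by simp
    ultimately show ?thesis using r by (simp add: field_simps)
  qed
  then have "shrink q y (rsmul r x) / r \<le> shrink q y x" by (intro shrink_greatest)
  then show "shrink q y (rsmul r x) \<le> r * shrink q y x" using r by (simp add: field_simps)
next
  have "0 \<le> shrink q y vzero"
    by (rule shrink_greatest) (simp add: vadd_vzero_left smul_closed[OF y] sublinear_rsmul_nonneg[OF q _ y])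
  then show "shrink q y vzero = 0"
    using shrink_le_self[OF q vzero_closed y] sublinear_vzero[OF q] by simp
qed

definition real_linear :: "('x \<Rightarrow> real) \<Rightarrow> bool" where
  "real_linear g \<longleftrightarrow>
     (\<forall>x\<in>X. \<forall>y\<in>X. g (vadd x y) = g x + g y) \<and> (\<forall>r. \<forall>x\<in>X. g (rsmul r x) = r * g x)"

lemma sublinear_chain_Inf:
  assumes ne: "C \<noteq> {}" and sub: "\<And>q. q \<in> C \<Longrightarrow> sublinear q"
    and total: "\<And>q q'. q \<in> C \<Longrightarrow> q' \<in> C \<Longrightarrow> q \<le> q' \<or> q' \<le> q"
    and bdd: "\<And>x. x \<in> X \<Longrightarrow> bdd_below ((\<lambda>q. q x) ` C)"
  shows "sublinear (\<lambda>x. Inf ((\<lambda>q. q x) ` C))" (is "sublinear ?u")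
proof -
  have lower: "?u x \<le> q x" if "x \<in> X" "q \<in> C" for x q
    using that bdd by (auto intro: cInf_lower)
  have greatest: "c \<le> ?u x" if "\<And>q. q \<in> C \<Longrightarrow> c \<le> q x" for x c
    using that ne by (auto intro: cInf_greatest)
  show ?thesis unfolding sublinear_def
  proof (intro conjI ballI allI impI)
    fix x y assume x: "x \<in> X" and y: "y \<in> X"
    have "?u (vadd x y) \<le> q1 x + q2 y" if q1: "q1 \<in> C" and q2: "q2 \<in> C" for q1 q2
    proof -
      have "\<exists>q\<in>C. q \<le> q1 \<and> q \<le> q2" using total[OF q1 q2] q1 q2 by auto
      then obtain q where q: "q \<in> C" "q \<le> q1" "q \<le> q2" by blast
      have "?u (vadd x y) \<le> q (vadd x y)" using lower vadd_closed[OF x y] q by blast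
      also have "\<dots> \<le> q x + q y" using sublinear_vadd[OF sub[OF q(1)] x y] .
      also have "\<dots> \<le> q1 x + q2 y" using q by (simp add: add_mono le_funD)
      finally show ?thesis .
    qed
    then have "?u (vadd x y) - q2 y \<le> ?u x" if "q2 \<in> C" for q2
      using greatest that by (metis diff_le_eq)
    then have "?u (vadd x y) - ?u x \<le> ?u y" using greatest by (metis diff_le_eq add.commute)
    then show "?u (vadd x y) \<le> ?u x + ?u y" by simp
  next
    fix r :: real and x assume r: "r > 0" and x: "x \<in> X"
    have "?u (rsmul r x) / r \<le> q x" if q: "q \<in> C" for q
      using lower[OF rsmul_closed[OF x, of r] q] sublinear_rsmul_pos[OF sub[OF q] r x] r
      by (simp add: field_simps)
    then have "?u (rsmul r x) / r \<le> ?u x" using greatest by blast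
    then show "?u (rsmul r x) \<le> r * ?u x" using r by (simp add: field_simps)
  next
    obtain q where q: "q \<in> C" using ne by auto
    have "0 \<le> ?u vzero" by (rule greatest) (simp add: sublinear_vzero[OF sub])
    then show "?u vzero = 0"
      using lower[OF vzero_closed q] sublinear_vzero[OF sub[OF q]] by linarith
  qed
qed

text \<open>The functionals are made to vanish off \<open>X\<close> so that the pointwise order is antisymmetric.\<close>

definition dominated :: "('x \<Rightarrow> real) \<Rightarrow> ('x \<Rightarrow> real) set" where
  "dominated p = {q. sublinear q \<and> (\<forall>x\<in>X. q x \<le> p x) \<and> (\<forall>x. x \<notin> X \<longrightarrow> q x = 0)}"

lemma dominated_chain_lower_bound:
  assumes p: "sublinear p" and C: "C \<in> Chains (relation_of (\<lambda>q q'. q' \<le> q) (dominated p))"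
  shows "\<exists>u\<in>dominated p. \<forall>q\<in>C. u \<le> q"
proof (cases "C = {}")
  case True
  have "sublinear (\<lambda>x. if x \<in> X then p x else 0)"
    using sublinear_cong[of "\<lambda>x. if x \<in> X then p x else 0" p] p by simp
  then have "(\<lambda>x. if x \<in> X then p x else 0) \<in> dominated p" unfolding dominated_def by auto
  then show ?thesis using True by blast
next
  case False
  have CD: "C \<subseteq> dominated p" using Chains_relation_of[OF C] .
  have total: "q \<le> q' \<or> q' \<le> q" if "q \<in> C" "q' \<in> C" for q q'
    using C that unfolding Chains_def relation_of_def by blast
  have sub: "sublinear q" and below: "\<And>x. x \<in> X \<Longrightarrow> q x \<le> p x" if "q \<in> C" for q
    using CD that unfolding dominated_def by auto
  have bdd: "bdd_below ((\<lambda>q. q x) ` C)" if x: "x \<in> X" for x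
  proof -
    have "- p (neg x) \<le> q x" if q: "q \<in> C" for q
      using sublinear_neg_le[OF sub[OF q] x] below[OF q neg_closed[OF x]] by linarith
    then show ?thesis unfolding bdd_below_def by blast
  qed
  define u where "u x = (if x \<in> X then Inf ((\<lambda>q. q x) ` C) else 0)" for x
  have lower: "u x \<le> q x" if "q \<in> C" for x q
    using that bdd CD unfolding u_def dominated_def by (auto intro: cInf_lower)
  have "sublinear u"
    using sublinear_cong[of u] sublinear_chain_Inf[OF False sub total bdd] unfolding u_def by simp
  moreover obtain q where "q \<in> C" using False by blast
  then have "\<forall>x\<in>X. u x \<le> p x" using lower below by (meson order_trans)
  ultimately have "u \<in> dominated p" unfolding dominated_def u_def by auto
  then show ?thesis using lower by (auto simp: le_fun_def)
qed

lemma exists_minimal_sublinear: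
  assumes p: "sublinear p"
  obtains m where "sublinear m" "\<forall>x\<in>X. m x \<le> p x"
    "\<And>q. sublinear q \<Longrightarrow> \<forall>x\<in>X. q x \<le> m x \<Longrightarrow> \<forall>x\<in>X. q x = m x"
proof -
  have "partial_order_on (dominated p) (relation_of (\<lambda>q q'. q' \<le> q) (dominated p))"
    by (rule partial_order_on_relation_ofI) auto
  from predicate_Zorn[OF this dominated_chain_lower_bound[OF p]]
  obtain m where m: "m \<in> dominated p" and min: "\<forall>q\<in>dominated p. q \<le> m \<longrightarrow> q = m"
    by blast
  have "\<forall>x\<in>X. q x = m x" if q: "sublinear q" "\<forall>x\<in>X. q x \<le> m x" for q
  proof -
    define q' where "q' x = (if x \<in> X then q x else 0)" for x
    have "\<forall>x\<in>X. q' x \<le> p x" using q m unfolding q'_def dominated_def by fastforce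
    moreover have "sublinear q'" using sublinear_cong[of q' q] q unfolding q'_def by simp
    ultimately have "q' \<in> dominated p" unfolding dominated_def by (simp add: q'_def)
    moreover have "q' \<le> m" using q m unfolding q'_def dominated_def le_fun_def by auto
    ultimately have "q' = m" using min by blast
    then show ?thesis unfolding q'_def by auto
  qed
  then show ?thesis using that m unfolding dominated_def by blast
qed

lemma minimal_sublinear_real_linear:
  assumes m: "sublinear m"
    and min: "\<And>q. sublinear q \<Longrightarrow> \<forall>x\<in>X. q x \<le> m x \<Longrightarrow> \<forall>x\<in>X. q x = m x"
  shows "real_linear m"
proof -
  have neg: "m (neg y) = - m y" if y: "y \<in> X" for y
  proof -
    have "\<forall>x\<in>X. shrink m y x = m x"
      using min sublinear_shrink[OF m y] shrink_le_self[OF m _ y] by blast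
    then have "m (neg y) \<le> - m y" using shrink_neg[OF m y] neg_closed[OF y] by metis
    then show ?thesis using sublinear_neg_le[OF m y] by linarith
  qed
  have "m (vadd x y) = m x + m y" if x: "x \<in> X" and y: "y \<in> X" for x y
  proof -
    have "m x \<le> m (vadd x y) + m (neg y)"
      using sublinear_vadd[OF m vadd_closed[OF x y] neg_closed[OF y]] vadd_neg_cancel_right[OF x y]
      by simp
    then show ?thesis using neg[OF y] sublinear_vadd[OF m x y] by simp
  qed
  moreover have "m (rsmul r x) = r * m x" if x: "x \<in> X" for r x
  proof (cases "r \<ge> 0")
    case True then show ?thesis using sublinear_rsmul_nonneg[OF m True x] by simp
  next
    case False
    have "rsmul r x = neg (rsmul (-r) x)" using smul_smul[OF x, of "-1" "complex_of_real (-r)"] by simp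
    then show ?thesis
      using neg[OF rsmul_closed[OF x, of "-r"]] sublinear_rsmul_nonneg[OF m _ x, of "-r"] False by simp
  qed
  ultimately show ?thesis unfolding real_linear_def by blast
qed

lemma sublinear_dominates_real_linear:
  assumes p: "sublinear p" obtains g where "real_linear g" "\<forall>x\<in>X. g x \<le> p x"
proof -
  obtain m where m: "sublinear m" "\<forall>x\<in>X. m x \<le> p x"
    "\<And>q. sublinear q \<Longrightarrow> \<forall>x\<in>X. q x \<le> m x \<Longrightarrow> \<forall>x\<in>X. q x = m x"
    using exists_minimal_sublinear[OF p] by blast
  show ?thesis using that minimal_sublinear_real_linear[OF m(1,3)] m(2) by blast
qed

text \<open>Dominating by \<open>shrink vnorm w\<close> rather than by \<open>vnorm\<close> forces \<open>g (- w) \<le> - vnorm w\<close>.\<close>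

lemma real_functional_norming:
  assumes w: "w \<in> X"
  obtains g where "real_linear g" "\<forall>x\<in>X. \<bar>g x\<bar> \<le> vnorm x" "g w = vnorm w"
proof -
  obtain g where g: "real_linear g" and le: "\<forall>x\<in>X. g x \<le> shrink vnorm w x"
    using sublinear_dominates_real_linear[OF sublinear_shrink[OF sublinear_vnorm w]] by blast
  have g_neg: "g (neg x) = - g x" if "x \<in> X" for x
  proof -
    have "g (rsmul (-1) x) = -1 * g x" using g that unfolding real_linear_def by blast
    then show ?thesis by simp
  qed
  have g_le: "g x \<le> vnorm x" if "x \<in> X" for x
    using le shrink_le_self[OF sublinear_vnorm that w] that by (meson order_trans)
  have "\<bar>g x\<bar> \<le> vnorm x" if x: "x \<in> X" for x
    using g_le[OF x] g_le[OF neg_closed[OF x]] g_neg[OF x] vnorm_smul[OF x, of "-1"] by simp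
  moreover have "g (neg w) \<le> - vnorm w"
    using le neg_closed[OF w] shrink_neg[OF sublinear_vnorm w] by (meson order_trans)
  then have "g w = vnorm w" using g_neg[OF w] g_le[OF w] by simp
  ultimately show ?thesis using that g by blast
qed

definition bounded_functional :: "('x \<Rightarrow> complex) \<Rightarrow> bool" where
  "bounded_functional f \<longleftrightarrow> (\<forall>x\<in>X. \<forall>y\<in>X. f (vadd x y) = f x + f y) \<and>
     (\<forall>z. \<forall>x\<in>X. f (smul z x) = z * f x) \<and> (\<exists>K. \<forall>x\<in>X. cmod (f x) \<le> K * vnorm x)"

lemma bounded_functional_vadd: "bounded_functional f \<Longrightarrow> x \<in> X \<Longrightarrow> y \<in> X \<Longrightarrow> f (vadd x y) = f x + f y"
  unfolding bounded_functional_def by blast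

lemma bounded_functional_smul: "bounded_functional f \<Longrightarrow> x \<in> X \<Longrightarrow> f (smul z x) = z * f x"
  unfolding bounded_functional_def by blast

lemma bounded_functional_bound:
  assumes "bounded_functional f"
  obtains L where "L \<ge> 0" "\<And>x. x \<in> X \<Longrightarrow> cmod (f x) \<le> L * vnorm x"
proof -
  obtain L where "\<And>x. x \<in> X \<Longrightarrow> cmod (f x) \<le> L * vnorm x"
    using assms unfolding bounded_functional_def by blast
  then have "cmod (f x) \<le> \<bar>L\<bar> * vnorm x" if "x \<in> X" for x
    using that mult_right_mono[OF abs_ge_self vnorm_nonneg[OF that]] by (blast intro: order_trans)
  then show ?thesis by (rule that[OF abs_ge_zero])
qed

lemma real_linear_smul:
  assumes g: "real_linear g" and x: "x \<in> X"
  shows "g (smul z x) = Re z * g x + Im z * g (smul \<i> x)"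
proof -
  have "vadd (rsmul (Re z) x) (rsmul (Im z) (smul \<i> x))
      = smul (complex_of_real (Re z) + complex_of_real (Im z) * \<i>) x"
    using smul_smul[OF x] smul_add[OF x] by simp
  also have "complex_of_real (Re z) + complex_of_real (Im z) * \<i> = z"
    by (simp add: complex_eq_iff)
  finally have "smul z x = vadd (rsmul (Re z) x) (rsmul (Im z) (smul \<i> x))" by simp
  then show ?thesis using g smul_closed x unfolding real_linear_def by simp
qed

text \<open>The witness is the complexification \<open>f x = g x - \<i> g (\<i> x)\<close> of a norming real functional \<open>g\<close>.\<close>

lemma complex_functional_nonzero:
  assumes w: "w \<in> X" and w0: "w \<noteq> vzero"
  obtains f where "bounded_functional f" "f w \<noteq> 0"
proof -
  obtain g where g: "real_linear g" and g_bound: "\<forall>x\<in>X. \<bar>g x\<bar> \<le> vnorm x" and gw: "g w = vnorm w"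
    using real_functional_norming[OF w] by blast
  define f where "f x = complex_of_real (g x) - \<i> * complex_of_real (g (smul \<i> x))" for x
  have "f (vadd x y) = f x + f y" if "x \<in> X" "y \<in> X" for x y
    using g that smul_vadd smul_closed unfolding f_def real_linear_def by (simp add: algebra_simps)
  moreover have "f (smul z x) = z * f x" if x: "x \<in> X" for z x
    using real_linear_smul[OF g x, of z] real_linear_smul[OF g x, of "\<i> * z"] smul_smul[OF x, of \<i> z]
    unfolding f_def by (simp add: complex_eq_iff algebra_simps)
  moreover have "cmod (f x) \<le> 2 * vnorm x" if x: "x \<in> X" for x
  proof -
    have "cmod (f x) \<le> \<bar>g x\<bar> + \<bar>g (smul \<i> x)\<bar>"
      unfolding f_def using norm_triangle_ineq4 by (metis norm_ii norm_mult norm_of_real mult_1)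
    also have "\<dots> \<le> vnorm x + vnorm (smul \<i> x)" using g_bound x smul_closed by (meson add_mono)
    also have "\<dots> = 2 * vnorm x" using vnorm_smul[OF x] by simp
    finally show ?thesis .
  qed
  moreover have "f w \<noteq> 0"
    using gw vnorm_nonneg[OF w] vnorm_eq_zero_iff[OF w] w0 unfolding f_def by (auto simp: complex_eq_iff)
  ultimately show ?thesis using that unfolding bounded_functional_def by blast
qed

lemma bounded_functionals_separate:
  assumes u: "u \<in> X" and v: "v \<in> X" and eq: "\<And>f. bounded_functional f \<Longrightarrow> f u = f v"
  shows "u = v"
proof (rule ccontr)
  assume "u \<noteq> v"
  define w where "w = vadd u (neg v)"
  have w: "w \<in> X" unfolding w_def using vadd_closed u neg_closed v by blast
  have "vadd w v = u" unfolding w_def using vadd_assoc[OF u neg_closed[OF v] v] vadd_neg_left[OF v] vadd_vzero_right[OF u] by simp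
  then have "w \<noteq> vzero" using \<open>u \<noteq> v\<close> vadd_vzero_left[OF v] by auto
  then obtain f where f: "bounded_functional f" and "f w \<noteq> 0"
    using complex_functional_nonzero[OF w] by blast
  moreover have "f w = f u - f v"
    using f u v neg_closed unfolding w_def bounded_functional_def by simp
  ultimately show False using eq[OF f] by simp
qed

lemma bounded_linear_into_closed: "bounded_linear_into M \<delta> \<Longrightarrow> \<delta> a \<in> X"
  unfolding bounded_linear_into_def by blast

lemma bounded_linear_into_add: "bounded_linear_into M \<delta> \<Longrightarrow> \<delta> (a + a') = vadd (\<delta> a) (\<delta> a')"
  unfolding bounded_linear_into_def by blast

lemma bounded_linear_into_scaleC: "bounded_linear_into M \<delta> \<Longrightarrow> \<delta> (scaleC z a) = smul z (\<delta> a)"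
  unfolding bounded_linear_into_def by blast

lemma bounded_linear_into_bound:
  assumes "bounded_linear_into M \<delta>"
  obtains K where "K \<ge> 0" "\<And>a. vnorm (\<delta> a) \<le> K * norm a"
proof -
  obtain K where "\<And>a. vnorm (\<delta> a) \<le> K * norm a" using assms unfolding bounded_linear_into_def by blast
  then have "vnorm (\<delta> a) \<le> \<bar>K\<bar> * norm a" for a
    using mult_right_mono[OF abs_ge_self norm_ge_zero] by (blast intro: order_trans)
  then show ?thesis by (rule that[OF abs_ge_zero])
qed

end

section \<open>Functionals on a bimodule: (ii) implies (i)\<close>

locale unital_bimodule_struct =
  fixes M :: "('b::complex_banach_algebra_1, 'c::complex_banach_algebra_1, 'x) bimod"
  assumes unital_bimodule: "unital_banach_bimodule M"
begin

sublocale banach_space_struct M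
  using unital_bimodule by unfold_locales (simp add: unital_banach_bimodule_def)

abbreviation "lact \<equiv> bm_lact M"
abbreviation "ract \<equiv> bm_ract M"

lemmas unital_bimodule_unfolded = unital_bimodule[unfolded unital_banach_bimodule_def Let_def]

lemma lact_closed: "x \<in> X \<Longrightarrow> lact b x \<in> X"
  using unital_bimodule_unfolded by (elim conjE) metis

lemma ract_closed: "x \<in> X \<Longrightarrow> ract x c \<in> X"
  using unital_bimodule_unfolded by (elim conjE) metis

lemma lact_vadd: "x \<in> X \<Longrightarrow> y \<in> X \<Longrightarrow> lact b (vadd x y) = vadd (lact b x) (lact b y)"
  using unital_bimodule_unfolded by (elim conjE) metis

lemma lact_add: "x \<in> X \<Longrightarrow> lact (b + b') x = vadd (lact b x) (lact b' x)"
  using unital_bimodule_unfolded by (elim conjE) metis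

lemma lact_scaleC: "x \<in> X \<Longrightarrow> lact (scaleC z b) x = smul z (lact b x)"
  using unital_bimodule_unfolded by (elim conjE) metis

lemma lact_smul: "x \<in> X \<Longrightarrow> lact b (smul z x) = smul z (lact b x)"
  using unital_bimodule_unfolded by (elim conjE) metis

lemma lact_mult: "x \<in> X \<Longrightarrow> lact (b * b') x = lact b (lact b' x)"
  using unital_bimodule_unfolded by (elim conjE) metis

lemma lact_one: "x \<in> X \<Longrightarrow> lact 1 x = x"
  using unital_bimodule_unfolded by (elim conjE) metis

lemma ract_vadd: "x \<in> X \<Longrightarrow> y \<in> X \<Longrightarrow> ract (vadd x y) c = vadd (ract x c) (ract y c)"
  using unital_bimodule_unfolded by (elim conjE) metis

lemma ract_add: "x \<in> X \<Longrightarrow> ract x (c + c') = vadd (ract x c) (ract x c')"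
  using unital_bimodule_unfolded by (elim conjE) metis

lemma ract_scaleC: "x \<in> X \<Longrightarrow> ract x (scaleC z c) = smul z (ract x c)"
  using unital_bimodule_unfolded by (elim conjE) metis

lemma ract_smul: "x \<in> X \<Longrightarrow> ract (smul z x) c = smul z (ract x c)"
  using unital_bimodule_unfolded by (elim conjE) metis

lemma ract_mult: "x \<in> X \<Longrightarrow> ract x (c * c') = ract (ract x c) c'"
  using unital_bimodule_unfolded by (elim conjE) metis

lemma ract_one: "x \<in> X \<Longrightarrow> ract x 1 = x"
  using unital_bimodule_unfolded by (elim conjE) metis

lemma lact_ract: "x \<in> X \<Longrightarrow> lact b (ract x c) = ract (lact b x) c"
  using unital_bimodule_unfolded by (elim conjE) metis

lemma vnorm_lact_ract: "x \<in> X \<Longrightarrow> vnorm (lact b (ract x c)) \<le> norm b * vnorm x * norm c"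
  using unital_bimodule_unfolded by (elim conjE) metis

definition functional_form :: "('a \<Rightarrow> 'x) \<Rightarrow> ('x \<Rightarrow> complex) \<Rightarrow> 'a \<Rightarrow> 'c \<Rightarrow> 'b \<Rightarrow> complex" where
  "functional_form \<delta> f a c b = f (lact b (ract (\<delta> a) c))"

lemma bounded_trilinear_functional_form:
  assumes \<delta>: "bounded_linear_into M \<delta>" and f: "bounded_functional f"
  shows "bounded_trilinear_form (functional_form \<delta> f)"
proof -
  obtain K where K: "K \<ge> 0" "\<And>a. vnorm (\<delta> a) \<le> K * norm a"
    using bounded_linear_into_bound[OF \<delta>] by blast
  obtain L where L: "L \<ge> 0" "\<And>x. x \<in> X \<Longrightarrow> cmod (f x) \<le> L * vnorm x"
    using bounded_functional_bound[OF f] by blast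
  note \<delta>X = bounded_linear_into_closed[OF \<delta>]
  have "cmod (functional_form \<delta> f a c b) \<le> (L * K) * norm a * norm c * norm b" for a c b
  proof -
    have "cmod (functional_form \<delta> f a c b) \<le> L * vnorm (lact b (ract (\<delta> a) c))"
      unfolding functional_form_def using L(2) lact_closed ract_closed \<delta>X by blast
    also have "\<dots> \<le> L * (norm b * vnorm (\<delta> a) * norm c)"
      using vnorm_lact_ract[OF \<delta>X] L(1) by (rule mult_left_mono)
    also have "\<dots> \<le> L * (norm b * (K * norm a) * norm c)"
      using K(2)[of a] L(1) by (intro mult_left_mono mult_right_mono) auto
    finally show ?thesis by (simp add: algebra_simps)
  qed
  then show ?thesis unfolding bounded_trilinear_form_def
    by (intro conjI allI exI[of _ "L * K"])
      (simp_all add: functional_form_def bounded_linear_into_add[OF \<delta>] bounded_linear_into_scaleC[OF \<delta>]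
        \<delta>X bounded_functional_vadd[OF f] bounded_functional_smul[OF f] lact_closed ract_closed
        ract_vadd ract_smul ract_add ract_scaleC lact_vadd lact_smul lact_add lact_scaleC)
qed

lemma functional_form_jordan:
  assumes \<delta>: "bounded_linear_into M \<delta>" and J: "jordan_derivation M \<phi> \<psi> \<delta>"
    and f: "bounded_functional f"
  shows "functional_form \<delta> f (a * a) c b
    = functional_form \<delta> f a (\<psi> a * c) b + functional_form \<delta> f a c (b * \<phi> a)"
proof -
  note \<delta>X = bounded_linear_into_closed[OF \<delta>]
  have "lact b (ract (\<delta> (a * a)) c)
      = vadd (lact b (ract (ract (\<delta> a) (\<psi> a)) c)) (lact b (ract (lact (\<phi> a) (\<delta> a)) c))"
    using J \<delta>X lact_closed ract_closed unfolding jordan_derivation_def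
    by (simp add: vadd_commute ract_vadd lact_vadd)
  also have "lact b (ract (ract (\<delta> a) (\<psi> a)) c) = lact b (ract (\<delta> a) (\<psi> a * c))"
    using ract_mult[OF \<delta>X] by simp
  also have "lact b (ract (lact (\<phi> a) (\<delta> a)) c) = lact (b * \<phi> a) (ract (\<delta> a) c)"
    using lact_ract[OF \<delta>X] lact_mult[OF ract_closed[OF \<delta>X]] by simp
  finally show ?thesis
    unfolding functional_form_def using bounded_functional_vadd[OF f] \<delta>X lact_closed ract_closed by simp
qed

lemma derivation_if_functional_forms:
  assumes \<delta>: "bounded_linear_into M \<delta>"
    and H: "\<And>f a d. bounded_functional f \<Longrightarrow> functional_form \<delta> f (a * d) 1 1
      = functional_form \<delta> f a (\<psi> d) 1 + functional_form \<delta> f d 1 (\<phi> a)"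
  shows "derivation M \<phi> \<psi> \<delta>"
  unfolding derivation_def
proof (intro allI)
  fix a d
  note \<delta>X = bounded_linear_into_closed[OF \<delta>]
  show "\<delta> (a * d) = vadd (ract (\<delta> a) (\<psi> d)) (lact (\<phi> a) (\<delta> d))"
  proof (rule bounded_functionals_separate)
    fix f assume f: "bounded_functional f"
    then show "f (\<delta> (a * d)) = f (vadd (ract (\<delta> a) (\<psi> d)) (lact (\<phi> a) (\<delta> d)))"
      using H[OF f, of a d] \<delta>X lact_closed ract_closed bounded_functional_vadd[OF f]
      unfolding functional_form_def by (simp add: lact_one ract_one)
  qed (use \<delta>X lact_closed ract_closed vadd_closed in auto)
qed

end

lemma cond_ii_imp_cond_i:
  assumes ii: "cond_ii \<phi> \<psi>" shows "cond_i \<phi> \<psi> TYPE('x)"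
  unfolding cond_i_def
proof (intro allI impI)
  fix M :: "('b, 'c, 'x) bimod" and \<delta>
  assume "unital_banach_bimodule M" and \<delta>: "bounded_linear_into M \<delta>" and J: "jordan_derivation M \<phi> \<psi> \<delta>"
  then interpret unital_bimodule_struct M by unfold_locales
  show "derivation M \<phi> \<psi> \<delta>"
  proof (rule derivation_if_functional_forms[OF \<delta>])
    fix f a d assume f: "bounded_functional f"
    have "\<forall>a d b c. functional_form \<delta> f (a * d) c b
        = functional_form \<delta> f a (\<psi> d * c) b + functional_form \<delta> f d c (b * \<phi> a)"
      using ii bounded_trilinear_functional_form[OF \<delta> f] functional_form_jordan[OF \<delta> J f]
      unfolding cond_ii_def by blast
    then show "functional_form \<delta> f (a * d) 1 1 = functional_form \<delta> f a (\<psi> d) 1 + functional_form \<delta> f d 1 (\<phi> a)"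
      by (metis mult_1_left mult_1_right)
  qed
qed

section \<open>The bimodule of bounded bilinear forms: (i) implies (ii)\<close>

definition bounded_bilinear_form ::
    "('c::complex_normed_vector \<Rightarrow> 'b::complex_normed_vector \<Rightarrow> complex) \<Rightarrow> bool" where
  "bounded_bilinear_form F \<longleftrightarrow>
     (\<forall>c c' b. F (c + c') b = F c b + F c' b) \<and> (\<forall>z c b. F (scaleC z c) b = z * F c b) \<and>
     (\<forall>c b b'. F c (b + b') = F c b + F c b') \<and> (\<forall>z c b. F c (scaleC z b) = z * F c b) \<and>
     (\<exists>K. \<forall>c b. cmod (F c b) \<le> K * norm c * norm b)"

text \<open>The quotient is \<open>0\<close> when \<open>c = 0\<close> or \<open>b = 0\<close>, so these pairs do not disturb the supremum.\<close>

definition bilinear_norm ::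
    "('c::complex_normed_vector \<Rightarrow> 'b::complex_normed_vector \<Rightarrow> complex) \<Rightarrow> real" where
  "bilinear_norm F = Sup (range (\<lambda>(c, b). cmod (F c b) / (norm c * norm b)))"

lemma bounded_bilinear_formI:
  assumes "\<And>c c' b. F (c + c') b = F c b + F c' b" "\<And>z c b. F (scaleC z c) b = z * F c b"
    "\<And>c b b'. F c (b + b') = F c b + F c b'" "\<And>z c b. F c (scaleC z b) = z * F c b"
    "\<And>c b. cmod (F c b) \<le> K * norm c * norm b"
  shows "bounded_bilinear_form F"
  unfolding bounded_bilinear_form_def using assms by blast

lemma bilinear_form_add_left: "bounded_bilinear_form F \<Longrightarrow> F (c + c') b = F c b + F c' b"
  unfolding bounded_bilinear_form_def by blast

lemma bilinear_form_add_right: "bounded_bilinear_form F \<Longrightarrow> F c (b + b') = F c b + F c b'"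
  unfolding bounded_bilinear_form_def by blast

lemma bilinear_form_scaleC_left: "bounded_bilinear_form F \<Longrightarrow> F (scaleC z c) b = z * F c b"
  unfolding bounded_bilinear_form_def by blast

lemma bilinear_form_scaleC_right: "bounded_bilinear_form F \<Longrightarrow> F c (scaleC z b) = z * F c b"
  unfolding bounded_bilinear_form_def by blast

lemmas bilinear_form_linear = bilinear_form_add_left bilinear_form_add_right
  bilinear_form_scaleC_left bilinear_form_scaleC_right

lemma bilinear_form_zero_left: "bounded_bilinear_form F \<Longrightarrow> F 0 b = 0"
  using bilinear_form_add_left[of F 0 0 b] by simp

lemma bilinear_form_zero_right: "bounded_bilinear_form F \<Longrightarrow> F c 0 = 0"
  using bilinear_form_add_right[of F c 0 0] by simp

lemma bilinear_ratio_le: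
  assumes "\<And>c b. cmod (F c b) \<le> K * norm c * norm b" and "K \<ge> 0"
  shows "cmod (F c b) / (norm c * norm b) \<le> K"
proof (cases "norm c * norm b = 0")
  case True then show ?thesis by (simp only: True) (simp add: assms(2))
next
  case False
  then have "norm c * norm b > 0" by (simp add: zero_less_mult_iff)
  then show ?thesis using assms(1)[of c b] by (simp add: pos_divide_le_eq mult.assoc)
qed

lemma bilinear_norm_le:
  assumes "\<And>c b. cmod (F c b) \<le> K * norm c * norm b" and "K \<ge> 0"
  shows "bilinear_norm F \<le> K"
  unfolding bilinear_norm_def by (rule cSup_least) (use bilinear_ratio_le[OF assms] in auto)

lemma bilinear_ratio_le_norm:
  assumes "bounded_bilinear_form F"
  shows "cmod (F c b) / (norm c * norm b) \<le> bilinear_norm F"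
proof -
  obtain K where K: "\<And>c b. cmod (F c b) \<le> K * norm c * norm b"
    using assms unfolding bounded_bilinear_form_def by blast
  have "cmod (F c b) \<le> \<bar>K\<bar> * norm c * norm b" for c b
    using K[of c b] mult_right_mono[OF abs_ge_self[of K], of "norm c * norm b"] by (simp add: mult.assoc)
  then have "bdd_above (range (\<lambda>(c, b). cmod (F c b) / (norm c * norm b)))"
    using bilinear_ratio_le[of F "\<bar>K\<bar>"] unfolding bdd_above_def by fastforce
  then show ?thesis unfolding bilinear_norm_def by (rule cSup_upper[rotated]) auto
qed

lemma bilinear_norm_nonneg: "bounded_bilinear_form F \<Longrightarrow> bilinear_norm F \<ge> 0"
  using bilinear_ratio_le_norm[of F 0 0] by simp

lemma bilinear_norm_bound:
  assumes F: "bounded_bilinear_form F" shows "cmod (F c b) \<le> bilinear_norm F * norm c * norm b"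
proof (cases "c = 0 \<or> b = 0")
  case True then show ?thesis using bilinear_form_zero_left[OF F] bilinear_form_zero_right[OF F] by auto
next
  case False
  then have "norm c * norm b > 0" by simp
  then show ?thesis using bilinear_ratio_le_norm[OF F, of c b] by (simp add: pos_divide_le_eq mult.assoc)
qed

lemma bounded_bilinear_form_zero: "bounded_bilinear_form (\<lambda>c b. 0)"
  by (rule bounded_bilinear_formI[where K=0]) auto

lemma bounded_bilinear_form_add:
  assumes F: "bounded_bilinear_form F" and G: "bounded_bilinear_form G"
  shows "bounded_bilinear_form (\<lambda>c b. F c b + G c b)"
proof (rule bounded_bilinear_formI)
  fix c b
  show "cmod (F c b + G c b) \<le> (bilinear_norm F + bilinear_norm G) * norm c * norm b"
    using norm_triangle_ineq[of "F c b" "G c b"] bilinear_norm_bound[OF F, of c b]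
      bilinear_norm_bound[OF G, of c b] by (simp add: algebra_simps)
qed (simp_all add: F G bilinear_form_linear algebra_simps)

lemma bounded_bilinear_form_scale:
  assumes F: "bounded_bilinear_form F" shows "bounded_bilinear_form (\<lambda>c b. z * F c b)"
proof (rule bounded_bilinear_formI)
  fix c b
  show "cmod (z * F c b) \<le> (cmod z * bilinear_norm F) * norm c * norm b"
    using mult_left_mono[OF bilinear_norm_bound[OF F, of c b], of "cmod z"] by (simp add: norm_mult mult.assoc)
qed (simp_all add: F bilinear_form_linear algebra_simps)

lemma bilinear_norm_mult:
  fixes F :: "'c::complex_banach_algebra_1 \<Rightarrow> 'b::complex_banach_algebra_1 \<Rightarrow> complex"
  assumes F: "bounded_bilinear_form F"
  shows "cmod (F (c' * c) (b * b')) \<le> (norm b' * bilinear_norm F * norm c') * norm c * norm b"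
proof -
  have "cmod (F (c' * c) (b * b')) \<le> bilinear_norm F * norm (c' * c) * norm (b * b')"
    using bilinear_norm_bound[OF F] .
  also have "\<dots> \<le> bilinear_norm F * (norm c' * norm c) * (norm b * norm b')"
    by (intro mult_mono mult_left_mono norm_mult_ineq) (simp_all add: bilinear_norm_nonneg[OF F])
  finally show ?thesis by (simp add: algebra_simps)
qed

lemma bounded_bilinear_form_mult:
  fixes F :: "'c::complex_banach_algebra_1 \<Rightarrow> 'b::complex_banach_algebra_1 \<Rightarrow> complex"
  assumes F: "bounded_bilinear_form F"
  shows "bounded_bilinear_form (\<lambda>c b. F (c' * c) (b * b'))"
  by (rule bounded_bilinear_formI[OF _ _ _ _ bilinear_norm_mult[OF F]])
    (simp_all add: F bilinear_form_linear distrib_left distrib_right mult_scaleC_left mult_scaleC_right)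

lemma bilinear_norm_mult_le:
  fixes F :: "'c::complex_banach_algebra_1 \<Rightarrow> 'b::complex_banach_algebra_1 \<Rightarrow> complex"
  assumes F: "bounded_bilinear_form F"
  shows "bilinear_norm (\<lambda>c b. F (c' * c) (b * b')) \<le> norm b' * bilinear_norm F * norm c'"
  using bilinear_norm_mult[OF F] by (rule bilinear_norm_le) (simp add: bilinear_norm_nonneg[OF F])

lemma bilinear_norm_eq_zero_iff:
  assumes F: "bounded_bilinear_form F" shows "bilinear_norm F = 0 \<longleftrightarrow> F = (\<lambda>c b. 0)"
proof
  assume "bilinear_norm F = 0"
  then show "F = (\<lambda>c b. 0)" using bilinear_norm_bound[OF F] by (intro ext) (metis mult_zero_left norm_le_zero_iff)
next
  assume "F = (\<lambda>c b. 0)"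
  then show "bilinear_norm F = 0"
    using bilinear_norm_le[of F 0] bilinear_norm_nonneg[OF F] by simp
qed

lemma bilinear_norm_triangle:
  assumes F: "bounded_bilinear_form F" and G: "bounded_bilinear_form G"
  shows "bilinear_norm (\<lambda>c b. F c b + G c b) \<le> bilinear_norm F + bilinear_norm G"
proof (rule bilinear_norm_le)
  show "cmod (F c b + G c b) \<le> (bilinear_norm F + bilinear_norm G) * norm c * norm b" for c b
    using norm_triangle_ineq[of "F c b" "G c b"] bilinear_norm_bound[OF F, of c b]
      bilinear_norm_bound[OF G, of c b] by (simp add: algebra_simps)
qed (simp add: add_nonneg_nonneg bilinear_norm_nonneg F G)

lemma bilinear_norm_scale:
  assumes F: "bounded_bilinear_form F" shows "bilinear_norm (\<lambda>c b. z * F c b) = cmod z * bilinear_norm F"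
proof (cases "z = 0")
  case True then show ?thesis using bilinear_norm_eq_zero_iff[OF bounded_bilinear_form_zero] by simp
next
  case False
  have zF: "bounded_bilinear_form (\<lambda>c b. z * F c b)" using bounded_bilinear_form_scale[OF F] .
  have "bilinear_norm (\<lambda>c b. z * F c b) \<le> cmod z * bilinear_norm F"
    using bilinear_norm_bound[OF F] bilinear_norm_nonneg[OF F]
    by (intro bilinear_norm_le) (simp_all add: norm_mult mult.assoc mult_left_mono)
  moreover have "bilinear_norm F \<le> bilinear_norm (\<lambda>c b. z * F c b) / cmod z"
  proof (rule bilinear_norm_le)
    fix c b
    have "cmod z * cmod (F c b) \<le> bilinear_norm (\<lambda>c b. z * F c b) * norm c * norm b"
      using bilinear_norm_bound[OF zF, of c b] by (simp add: norm_mult)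
    then show "cmod (F c b) \<le> bilinear_norm (\<lambda>c b. z * F c b) / cmod z * norm c * norm b"
      using False by (simp add: field_simps)
  qed (use bilinear_norm_nonneg[OF zF] in simp)
  ultimately show ?thesis using False by (simp add: field_simps)
qed

lemma bounded_bilinear_form_limit:
  fixes s :: "nat \<Rightarrow> 'c::complex_normed_vector \<Rightarrow> 'b::complex_normed_vector \<Rightarrow> complex"
  assumes s: "\<And>n. bounded_bilinear_form (s n)" and lim: "\<And>c b. (\<lambda>n. s n c b) \<longlonglongrightarrow> l c b"
    and close: "\<And>c b. cmod (s N c b - l c b) \<le> K * norm c * norm b"
  shows "bounded_bilinear_form l"
proof (rule bounded_bilinear_formI)
  fix c c' b
  have "(\<lambda>n. s n (c + c') b) \<longlonglongrightarrow> l c b + l c' b"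
    using tendsto_add[OF lim lim] by (simp add: s bilinear_form_add_left)
  then show "l (c + c') b = l c b + l c' b" using lim LIMSEQ_unique by blast
next
  fix z c b
  have "(\<lambda>n. s n (scaleC z c) b) \<longlonglongrightarrow> z * l c b"
    using tendsto_mult_left[OF lim] by (simp add: s bilinear_form_scaleC_left)
  then show "l (scaleC z c) b = z * l c b" using lim LIMSEQ_unique by blast
next
  fix c b b'
  have "(\<lambda>n. s n c (b + b')) \<longlonglongrightarrow> l c b + l c b'"
    using tendsto_add[OF lim lim] by (simp add: s bilinear_form_add_right)
  then show "l c (b + b') = l c b + l c b'" using lim LIMSEQ_unique by blast
next
  fix z c b
  have "(\<lambda>n. s n c (scaleC z b)) \<longlonglongrightarrow> z * l c b"
    using tendsto_mult_left[OF lim] by (simp add: s bilinear_form_scaleC_right)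
  then show "l c (scaleC z b) = z * l c b" using lim LIMSEQ_unique by blast
next
  fix c b
  have "cmod (l c b) \<le> cmod (s N c b) + cmod (s N c b - l c b)"
    using norm_triangle_ineq4[of "s N c b" "s N c b - l c b"] by simp
  also have "\<dots> \<le> bilinear_norm (s N) * norm c * norm b + K * norm c * norm b"
    using bilinear_norm_bound[OF s] close by (rule add_mono)
  finally show "cmod (l c b) \<le> (bilinear_norm (s N) + K) * norm c * norm b"
    by (simp add: algebra_simps)
qed

lemma uniformly_Cauchy_bilinear_forms_converge:
  fixes s :: "nat \<Rightarrow> 'c::complex_normed_vector \<Rightarrow> 'b::complex_normed_vector \<Rightarrow> complex"
  assumes s: "\<And>n. bounded_bilinear_form (s n)"
    and cauchy: "\<And>e. e > 0 \<Longrightarrow> \<exists>N. \<forall>m\<ge>N. \<forall>n\<ge>N. \<forall>c b. cmod (s m c b - s n c b) \<le> e * norm c * norm b"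
  obtains l where "bounded_bilinear_form l"
    "\<And>e. e > 0 \<Longrightarrow> \<exists>N. \<forall>n\<ge>N. \<forall>c b. cmod (s n c b - l c b) \<le> e * norm c * norm b"
proof -
  have cauchy_pointwise: "Cauchy (\<lambda>n. s n c b)" for c b
  proof (rule metric_CauchyI)
    fix e :: real assume e: "e > 0"
    define D where "D = norm c * norm b + 1"
    have D: "D > 0" "norm c * norm b \<le> D" unfolding D_def by (simp_all add: add_nonneg_pos)
    have "e / (2 * D) > 0" using e D by simp
    then obtain N where N: "\<forall>m\<ge>N. \<forall>n\<ge>N. cmod (s m c b - s n c b) \<le> e / (2 * D) * norm c * norm b"
      using cauchy by blast
    have "dist (s m c b) (s n c b) < e" if "m \<ge> N" "n \<ge> N" for m n
    proof -
      have "dist (s m c b) (s n c b) \<le> e / (2 * D) * (norm c * norm b)"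
        using N that by (simp add: dist_norm mult.assoc)
      also have "\<dots> \<le> e / (2 * D) * D" using D e by (intro mult_left_mono) auto
      also have "\<dots> < e" using D e by simp
      finally show ?thesis .
    qed
    then show "\<exists>N. \<forall>m\<ge>N. \<forall>n\<ge>N. dist (s m c b) (s n c b) < e" by blast
  qed
  define l where "l c b = lim (\<lambda>n. s n c b)" for c b
  have lim: "(\<lambda>n. s n c b) \<longlonglongrightarrow> l c b" for c b
    using cauchy_pointwise[of c b] unfolding l_def by (simp add: Cauchy_convergent_iff convergent_LIMSEQ_iff)
  have close: "\<exists>N. \<forall>n\<ge>N. \<forall>c b. cmod (s n c b - l c b) \<le> e * norm c * norm b" if e: "e > 0" for e
  proof -
    obtain N where N: "\<forall>m\<ge>N. \<forall>n\<ge>N. \<forall>c b. cmod (s m c b - s n c b) \<le> e * norm c * norm b"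
      using cauchy e by blast
    have "cmod (s n c b - l c b) \<le> e * norm c * norm b" if "n \<ge> N" for n c b
      using N that by (intro LIMSEQ_le_const2[OF tendsto_norm[OF tendsto_diff[OF tendsto_const lim]]]) blast
    then show ?thesis by blast
  qed
  obtain N where "\<forall>n\<ge>N. \<forall>c b. cmod (s n c b - l c b) \<le> 1 * norm c * norm b" using close[of 1] by auto
  then have "bounded_bilinear_form l" using bounded_bilinear_form_limit[OF s lim] by blast
  then show ?thesis using that close by blast
qed

lemma bounded_bilinear_forms_complete:
  fixes s :: "nat \<Rightarrow> 'c::complex_normed_vector \<Rightarrow> 'b::complex_normed_vector \<Rightarrow> complex"
  assumes s: "\<forall>n. bounded_bilinear_form (s n)"
    and cauchy: "\<forall>e>0. \<exists>N. \<forall>m\<ge>N. \<forall>n\<ge>N. bilinear_norm (\<lambda>c b. s m c b + -1 * s n c b) < e"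
  shows "\<exists>l. bounded_bilinear_form l \<and> (\<forall>e>0. \<exists>N. \<forall>n\<ge>N. bilinear_norm (\<lambda>c b. s n c b + -1 * l c b) < e)"
proof -
  have diff: "bounded_bilinear_form (\<lambda>c b. F c b + -1 * G c b)"
    if "bounded_bilinear_form F" "bounded_bilinear_form G" for F G :: "'c \<Rightarrow> 'b \<Rightarrow> complex"
    using bounded_bilinear_form_add[OF that(1) bounded_bilinear_form_scale[OF that(2)]] .
  have "\<exists>N. \<forall>m\<ge>N. \<forall>n\<ge>N. \<forall>c b. cmod (s m c b - s n c b) \<le> e * norm c * norm b" if "e > 0" for e
  proof -
    obtain N where N: "\<forall>m\<ge>N. \<forall>n\<ge>N. bilinear_norm (\<lambda>c b. s m c b + -1 * s n c b) < e"
      using cauchy \<open>e > 0\<close> by blast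
    have "cmod (s m c b - s n c b) \<le> e * norm c * norm b" if "m \<ge> N" "n \<ge> N" for m n c b
    proof -
      have "cmod (s m c b - s n c b) \<le> bilinear_norm (\<lambda>c b. s m c b + -1 * s n c b) * norm c * norm b"
        using bilinear_norm_bound[OF diff[OF s[rule_format, of m] s[rule_format, of n]], of c b] by simp
      also have "\<dots> \<le> e * norm c * norm b"
        using N that by (intro mult_right_mono) (auto intro: less_imp_le)
      finally show ?thesis .
    qed
    then show ?thesis by blast
  qed
  then obtain l where l: "bounded_bilinear_form l"
    and close: "\<And>e. e > 0 \<Longrightarrow> \<exists>N. \<forall>n\<ge>N. \<forall>c b. cmod (s n c b - l c b) \<le> e * norm c * norm b"
    using uniformly_Cauchy_bilinear_forms_converge[of s] s by blast
  have "\<exists>N. \<forall>n\<ge>N. bilinear_norm (\<lambda>c b. s n c b + -1 * l c b) < e" if e: "e > 0" for e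
  proof -
    obtain N where N: "\<forall>n\<ge>N. \<forall>c b. cmod (s n c b - l c b) \<le> e / 2 * norm c * norm b"
      using close[of "e / 2"] e by auto
    have "bilinear_norm (\<lambda>c b. s n c b + -1 * l c b) \<le> e / 2" if "n \<ge> N" for n
      using N that e by (intro bilinear_norm_le) auto
    then have "\<forall>n\<ge>N. bilinear_norm (\<lambda>c b. s n c b + -1 * l c b) \<le> e / 2" by blast
    moreover have "e / 2 < e" using e by simp
    ultimately show ?thesis by (blast intro: le_less_trans)
  qed
  then show ?thesis using l by blast
qed

text \<open>The action is \<open>(b' \<cdot> F \<cdot> c') c b = F (c' * c) (b * b')\<close>; with \<open>\<delta> a = V a\<close> the Jordan
  identity for \<open>\<delta>\<close> is exactly the hypothesis on \<open>V\<close> in condition (ii).\<close>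

definition bilinear_forms_bimodule ::
    "('b::complex_banach_algebra_1, 'c::complex_banach_algebra_1, 'c \<Rightarrow> 'b \<Rightarrow> complex) bimod" where
  "bilinear_forms_bimodule =
    \<lparr>bm_carrier = {F. bounded_bilinear_form F}, bm_zero = (\<lambda>c b. 0), bm_add = (\<lambda>F G c b. F c b + G c b),
     bm_smul = (\<lambda>z F c b. z * F c b), bm_norm = bilinear_norm,
     bm_lact = (\<lambda>b' F c b. F c (b * b')), bm_ract = (\<lambda>F c' c b. F (c' * c) b)\<rparr>"

lemma bilinear_forms_bimodule_simps:
  "bm_carrier bilinear_forms_bimodule = {F. bounded_bilinear_form F}"
  "bm_zero bilinear_forms_bimodule = (\<lambda>c b. 0)"
  "bm_add bilinear_forms_bimodule = (\<lambda>F G c b. F c b + G c b)"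
  "bm_smul bilinear_forms_bimodule = (\<lambda>z F c b. z * F c b)"
  "bm_norm bilinear_forms_bimodule = bilinear_norm"
  "bm_lact bilinear_forms_bimodule = (\<lambda>b' F c b. F c (b * b'))"
  "bm_ract bilinear_forms_bimodule = (\<lambda>F c' c b. F (c' * c) b)"
  by (simp_all add: bilinear_forms_bimodule_def)

lemma complex_banach_space_bilinear_forms:
  "complex_banach_space (bilinear_forms_bimodule :: ('b::complex_banach_algebra_1, 'c::complex_banach_algebra_1, _) bimod)"
  unfolding complex_banach_space_def Let_def bilinear_forms_bimodule_simps
proof (intro conjI ballI allI impI)
  fix F :: "'c \<Rightarrow> 'b \<Rightarrow> complex" assume "F \<in> {F. bounded_bilinear_form F}"
  then show "\<exists>G\<in>{F. bounded_bilinear_form F}. (\<lambda>c b. F c b + G c b) = (\<lambda>c b. 0)"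
    using bounded_bilinear_form_scale[of F "-1"] by (intro bexI[where x="\<lambda>c b. -1 * F c b"]) auto
next
  fix s :: "nat \<Rightarrow> 'c \<Rightarrow> 'b \<Rightarrow> complex"
  assume "\<forall>n. s n \<in> {F. bounded_bilinear_form F}"
    and "\<forall>e>0. \<exists>N. \<forall>m\<ge>N. \<forall>n\<ge>N. bilinear_norm (\<lambda>c b. s m c b + -1 * s n c b) < e"
  then show "\<exists>l\<in>{F. bounded_bilinear_form F}. \<forall>e>0. \<exists>N. \<forall>n\<ge>N. bilinear_norm (\<lambda>c b. s n c b + -1 * l c b) < e"
    using bounded_bilinear_forms_complete[of s] by simp
qed (auto simp: algebra_simps bounded_bilinear_form_zero bounded_bilinear_form_add bounded_bilinear_form_scale
    bilinear_norm_triangle bilinear_norm_scale bilinear_norm_eq_zero_iff)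

lemma unital_banach_bimodule_bilinear_forms:
  "unital_banach_bimodule (bilinear_forms_bimodule :: ('b::complex_banach_algebra_1, 'c::complex_banach_algebra_1, _) bimod)"
proof -
  have lact_bilinear: "bounded_bilinear_form (\<lambda>c b. F c (b * b'))"
    and ract_bilinear: "bounded_bilinear_form (\<lambda>c b. F (c' * c) b)"
    and norm_lact: "bilinear_norm (\<lambda>c b. F c (b * b')) \<le> norm b' * bilinear_norm F"
    and norm_ract: "bilinear_norm (\<lambda>c b. F (c' * c) b) \<le> bilinear_norm F * norm c'"
    if "bounded_bilinear_form (F :: 'c \<Rightarrow> 'b \<Rightarrow> complex)" for F b' c'
    using bounded_bilinear_form_mult[OF that, of 1 b'] bounded_bilinear_form_mult[OF that, of c' 1]
      bilinear_norm_mult_le[OF that, of 1 b'] bilinear_norm_mult_le[OF that, of c' 1]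
    by (simp_all add: mult.commute)
  show ?thesis
    unfolding unital_banach_bimodule_def Let_def
    by (intro conjI complex_banach_space_bilinear_forms)
      (auto simp: bilinear_forms_bimodule_simps lact_bilinear ract_bilinear norm_lact norm_ract
      bilinear_norm_mult_le bilinear_norm_mult_le[simplified mult.assoc] bilinear_form_linear
      distrib_left distrib_right mult_scaleC_left mult_scaleC_right mult.assoc intro!: ext)
qed

lemma cond_i_imp_cond_ii:
  fixes \<phi> :: "'a::complex_banach_algebra_1 \<Rightarrow> 'b::complex_banach_algebra_1"
    and \<psi> :: "'a \<Rightarrow> 'c::complex_banach_algebra_1"
  assumes i: "cond_i \<phi> \<psi> TYPE('c \<Rightarrow> 'b \<Rightarrow> complex)"
  shows "cond_ii \<phi> \<psi>"
  unfolding cond_ii_def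
proof (intro allI impI)
  fix V :: "'a \<Rightarrow> 'c \<Rightarrow> 'b \<Rightarrow> complex"
  assume V: "bounded_trilinear_form V"
    and jordan: "\<forall>a b c. V (a * a) c b = V a (\<psi> a * c) b + V a c (b * \<phi> a)"
  obtain K where K: "\<And>a c b. cmod (V a c b) \<le> K * norm a * norm c * norm b"
    using V unfolding bounded_trilinear_form_def by (elim conjE) metis
  have "bounded_bilinear_form (V a)" for a
    using V K[of a] unfolding bounded_trilinear_form_def
    by (intro bounded_bilinear_formI[where K = "K * norm a"]) auto
  moreover have "bilinear_norm (V a) \<le> \<bar>K\<bar> * norm a" for a
  proof (rule bilinear_norm_le)
    show "cmod (V a c b) \<le> \<bar>K\<bar> * norm a * norm c * norm b" for c b
      using K[of a c b] mult_right_mono[OF abs_ge_self[of K], of "norm a * norm c * norm b"]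
      by (simp add: mult.assoc)
  qed simp
  ultimately have "bounded_linear_into bilinear_forms_bimodule V"
    using V unfolding bounded_linear_into_def bilinear_forms_bimodule_simps bounded_trilinear_form_def
    by (auto intro!: ext)
  moreover have "jordan_derivation bilinear_forms_bimodule \<phi> \<psi> V"
    using jordan unfolding jordan_derivation_def bilinear_forms_bimodule_simps
    by (auto intro!: ext simp: add.commute)
  ultimately have "derivation bilinear_forms_bimodule \<phi> \<psi> V"
    using i unital_banach_bimodule_bilinear_forms unfolding cond_i_def by blast
  then have "V (a * d) = (\<lambda>c b. V a (\<psi> d * c) b + V d c (b * \<phi> a))" for a d
    unfolding derivation_def bilinear_forms_bimodule_simps by simp
  then show "V (a * d) c b = V a (\<psi> d * c) b + V d c (b * \<phi> a)" for a d b c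
    by simp
qed

theorem lemma3p2:
  fixes \<phi> :: "'a::complex_banach_algebra_1 \<Rightarrow> 'b::complex_banach_algebra_1"
    and \<psi> :: "'a \<Rightarrow> 'c::complex_banach_algebra_1"
  assumes "alg_hom \<phi>" and "alg_hom \<psi>"
  shows "(cond_ii \<phi> \<psi> \<longrightarrow> cond_i \<phi> \<psi> TYPE('x))
       \<and> (cond_i \<phi> \<psi> TYPE('c \<Rightarrow> 'b \<Rightarrow> complex) \<longrightarrow> cond_ii \<phi> \<psi>)"
  using cond_ii_imp_cond_i cond_i_imp_cond_ii by blast

end
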